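(* If $\lambda_1<a$ and $1<q<p$, then for any fixed $\Lambda>0$ there exists $t_0'=t_0'(\Lambda)>0$ such that $I^-_{\lambda,s}(-t\varphi_1)<0$ for all $t\ge t_0'$ and all $0<\lambda<\Lambda$.
   Context: $\Omega\subset\mathbb{R}^N$ bounded smooth domain, $s\in(0,1)$, $p>1$, $N>sp$. $X_p^s=\{u\in W^{s,p}(\mathbb{R}^N): u=0 \text{ a.e. in } \mathbb{R}^N\setminus\Omega\}$ with norm $\|u\|_{X_p^s}=\big(\int_{\mathbb{R}^{2N}}\frac{|u(x)-u(y)|^p}{|x-y|^{N+sp}}dxdy\big)^{1/p}$. $\lambda_1=\inf\{\|u\|_{X_p^s}^p:\|u\|_{L^p(\Omega)}=1\}$ is the first eigenvalue of the fractional $p$-Laplacian on $X_p^s$ and $\varphi_1$ its positive $L^p$-normalized eigenfunction. $u^-=\min\{u,0\}$ and $I^-_{\lambda,s}(u)=\frac1p\|u\|_{X_p^s}^p+\frac\lambda q\int_\Omega|u^-|^q-\frac ap\int_\Omega|u^-|^p$. *)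

theory Defs
  imports "HOL-Analysis.Analysis"
begin

text \<open>Ambient space: R^N rendered as an arbitrary Euclidean space 'a, N = DIM('a),
  with Lebesgue measure lborel.\<close>

fun Ck_on :: "nat \<Rightarrow> 'a::euclidean_space set \<Rightarrow> ('a \<Rightarrow> real) \<Rightarrow> bool" where
  "Ck_on 0 U f = continuous_on U f"
| "Ck_on (Suc k) U f = (f differentiable_on U \<and> continuous_on U f \<and>
      (\<forall>b\<in>Basis. Ck_on k U (\<lambda>x. frechet_derivative f (at x) b)))"

definition smooth_on :: "'a::euclidean_space set \<Rightarrow> ('a \<Rightarrow> real) \<Rightarrow> bool" where
  "smooth_on U f \<longleftrightarrow> (\<forall>k. Ck_on k U f)"

definition bounded_smooth_domain :: "'a::euclidean_space set \<Rightarrow> bool" where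
  "bounded_smooth_domain \<Omega> \<longleftrightarrow> bounded \<Omega> \<and> open \<Omega> \<and> connected \<Omega> \<and> \<Omega> \<noteq> {} \<and>
     (\<forall>z\<in>frontier \<Omega>. \<exists>U \<rho>. open U \<and> z \<in> U \<and> smooth_on U \<rho> \<and>
         frechet_derivative \<rho> (at z) \<noteq> (\<lambda>h. 0) \<and> \<Omega> \<inter> U = {x\<in>U. \<rho> x < 0})"

definition gagliardo :: "real \<Rightarrow> real \<Rightarrow> ('a::euclidean_space \<Rightarrow> real) \<Rightarrow> ennreal" where
  "gagliardo s p u = (\<integral>\<^sup>+ z. ennreal (\<bar>u (fst z) - u (snd z)\<bar> powr p /
        norm (fst z - snd z) powr (real DIM('a) + s * p)) \<partial>(lborel \<Otimes>\<^sub>M lborel))"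

definition Wsp :: "real \<Rightarrow> real \<Rightarrow> ('a::euclidean_space \<Rightarrow> real) set" where
  "Wsp s p = {u. u \<in> borel_measurable lborel \<and> (\<integral>\<^sup>+ x. ennreal (\<bar>u x\<bar> powr p) \<partial>lborel) < \<infinity>
                 \<and> gagliardo s p u < \<infinity>}"

definition Xsp :: "'a::euclidean_space set \<Rightarrow> real \<Rightarrow> real \<Rightarrow> ('a \<Rightarrow> real) set" where
  "Xsp \<Omega> s p = {u \<in> Wsp s p. AE x in lborel. x \<notin> \<Omega> \<longrightarrow> u x = 0}"

definition Xnorm_p :: "real \<Rightarrow> real \<Rightarrow> ('a::euclidean_space \<Rightarrow> real) \<Rightarrow> real" where
  "Xnorm_p s p u = enn2real (gagliardo s p u)"

definition Lint :: "'a::euclidean_space set \<Rightarrow> real \<Rightarrow> ('a \<Rightarrow> real) \<Rightarrow> real" where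
  "Lint \<Omega> r u = (\<integral>x\<in>\<Omega>. \<bar>u x\<bar> powr r \<partial>lborel)"

definition lambda1 :: "'a::euclidean_space set \<Rightarrow> real \<Rightarrow> real \<Rightarrow> real" where
  "lambda1 \<Omega> s p = Inf {Xnorm_p s p u | u. u \<in> Xsp \<Omega> s p \<and> Lint \<Omega> p u = 1}"

definition eigenfunction :: "'a::euclidean_space set \<Rightarrow> real \<Rightarrow> real \<Rightarrow> real \<Rightarrow> ('a \<Rightarrow> real) \<Rightarrow> bool" where
  "eigenfunction \<Omega> s p \<mu> u \<longleftrightarrow> u \<in> Xsp \<Omega> s p \<and> (\<exists>x. u x \<noteq> 0) \<and>
     (\<forall>v\<in>Xsp \<Omega> s p.
        (\<integral>z. \<bar>u (fst z) - u (snd z)\<bar> powr (p - 2) * (u (fst z) - u (snd z)) * (v (fst z) - v (snd z))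
              / norm (fst z - snd z) powr (real DIM('a) + s * p) \<partial>(lborel \<Otimes>\<^sub>M lborel))
        = \<mu> * (\<integral>x\<in>\<Omega>. \<bar>u x\<bar> powr (p - 2) * u x * v x \<partial>lborel))"

definition negpart :: "real \<Rightarrow> real" where
  "negpart r = min r 0"

definition I_minus :: "'a::euclidean_space set \<Rightarrow> real \<Rightarrow> real \<Rightarrow> real \<Rightarrow> real \<Rightarrow> real
                        \<Rightarrow> ('a \<Rightarrow> real) \<Rightarrow> real" where
  "I_minus \<Omega> s p q a lam u = Xnorm_p s p u / p + lam / q * Lint \<Omega> q (\<lambda>x. negpart (u x))
                            - a / p * Lint \<Omega> p (\<lambda>x. negpart (u x))"

end

theory Submission
  imports Defs "HOL-Real_Asymp.Multiseries_Expansion"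
begin

text \<open>Testing the eigenvalue equation with \<open>\<phi>\<^sub>1\<close> itself gives
  \<open>\<parallel>\<phi>\<^sub>1\<parallel>\<^sup>p = \<lambda>\<^sub>1\<close>, and both terms of \<open>I\<^sup>-\<close> are homogeneous along the ray
  \<open>-t\<phi>\<^sub>1\<close>, so \<open>I\<^sup>-(-t\<phi>\<^sub>1) = t\<^sup>p (\<lambda>\<^sub>1 - a)/p + \<lambda> t\<^sup>q \<integral>\<phi>\<^sub>1\<^sup>q / q\<close>.
  Since \<open>\<lambda>\<^sub>1 < a\<close> and \<open>q < p\<close>, the negative \<open>t\<^sup>p\<close> term wins for large \<open>t\<close>,
  uniformly for \<open>\<lambda> < \<Lambda>\<close>.\<close>

lemma abs_powr_diff_2_mult_self: "\<bar>d::real\<bar> powr (p - 2) * d * d = \<bar>d\<bar> powr p"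
proof (cases "d = 0")
  case False
  have "d * d = \<bar>d\<bar> powr 2" using False by (simp add: powr_numeral power2_eq_square)
  hence "\<bar>d\<bar> powr (p - 2) * d * d = \<bar>d\<bar> powr (p - 2) * \<bar>d\<bar> powr 2" by (simp add: mult.assoc)
  also have "\<dots> = \<bar>d\<bar> powr p" by (metis powr_add diff_add_cancel)
  finally show ?thesis .
qed simp

lemma Xnorm_p_eq_integral:
  fixes u :: "'a::euclidean_space \<Rightarrow> real"
  assumes "u \<in> borel_measurable lborel"
  shows "Xnorm_p s p u = (\<integral>z. \<bar>u (fst z) - u (snd z)\<bar> powr p /
        norm (fst z - snd z) powr (real DIM('a) + s * p) \<partial>(lborel \<Otimes>\<^sub>M lborel))"
  unfolding Xnorm_p_def gagliardo_def
  by (rule integral_eq_nn_integral[symmetric]) (use assms in auto)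

lemma Xnorm_p_cmult:
  fixes u :: "'a::euclidean_space \<Rightarrow> real"
  assumes "u \<in> borel_measurable lborel"
  shows "Xnorm_p s p (\<lambda>x. c * u x) = \<bar>c\<bar> powr p * Xnorm_p s p u"
proof -
  have "\<bar>c * u x - c * u y\<bar> powr p = \<bar>c\<bar> powr p * \<bar>u x - u y\<bar> powr p" for x y
    by (simp add: right_diff_distrib[symmetric] abs_mult powr_mult)
  then show ?thesis
    using assms
    by (simp add: Xnorm_p_eq_integral times_divide_eq_right[symmetric] del: times_divide_eq_right)
qed

lemma eigenfunction_Xnorm_p:
  assumes "eigenfunction \<Omega> s p \<mu> u"
  shows "Xnorm_p s p u = \<mu> * Lint \<Omega> p u"
proof -
  have u: "u \<in> Xsp \<Omega> s p" and "u \<in> borel_measurable lborel"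
    using assms unfolding eigenfunction_def Xsp_def Wsp_def by auto
  with assms show ?thesis
    unfolding eigenfunction_def Lint_def
    by (auto simp: Xnorm_p_eq_integral abs_powr_diff_2_mult_self dest!: bspec[OF _ u])
qed

lemma Lint_cmult: "Lint \<Omega> r (\<lambda>x. c * u x) = \<bar>c\<bar> powr r * Lint \<Omega> r u"
  unfolding Lint_def by (simp add: abs_mult powr_mult)

lemma Lint_cong: "(\<And>x. x \<in> \<Omega> \<Longrightarrow> u x = v x) \<Longrightarrow> Lint \<Omega> r u = Lint \<Omega> r v"
  unfolding Lint_def set_lebesgue_integral_def
  by (rule Bochner_Integration.integral_cong) (auto simp: indicator_def)

lemma Lint_nonneg: "Lint \<Omega> r u \<ge> 0"
  unfolding Lint_def set_lebesgue_integral_def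
  by (rule Bochner_Integration.integral_nonneg) (simp add: indicator_def)

lemma I_minus_neg_ray:
  fixes u :: "'a::euclidean_space \<Rightarrow> real"
  assumes "u \<in> borel_measurable lborel" "\<forall>x\<in>\<Omega>. u x \<ge> 0" "t \<ge> 0"
  shows "I_minus \<Omega> s p q a lam (\<lambda>x. - t * u x)
           = t powr p * (Xnorm_p s p u - a * Lint \<Omega> p u) / p + lam / q * t powr q * Lint \<Omega> q u"
proof -
  have "Lint \<Omega> r (\<lambda>x. negpart (- t * u x)) = t powr r * Lint \<Omega> r u" for r
  proof -
    have "Lint \<Omega> r (\<lambda>x. negpart (- t * u x)) = Lint \<Omega> r (\<lambda>x. - t * u x)"
      using assms(2,3) by (intro Lint_cong) (simp add: negpart_def)
    then show ?thesis using assms(3) Lint_cmult[of \<Omega> r "- t" u] by simp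
  qed
  moreover have "Xnorm_p s p (\<lambda>x. - t * u x) = t powr p * Xnorm_p s p u"
    using Xnorm_p_cmult[OF assms(1), of s p "- t"] assms(3) by simp
  ultimately show ?thesis
    by (simp add: I_minus_def algebra_simps diff_divide_distrib)
qed

lemma eventually_powr_dominates:
  fixes A B p q :: real
  assumes "A > 0" "q < p"
  shows "eventually (\<lambda>t. B * t powr q < A * t powr p) at_top"
proof -
  have "eventually (\<lambda>t. B / A + 1 \<le> t powr (p - q)) at_top"
    using real_powr_at_top[of "p - q"] assms(2) by (simp add: filterlim_at_top)
  moreover have "eventually (\<lambda>t. t > (0::real)) at_top"
    by (rule eventually_gt_at_top)
  ultimately show ?thesis
  proof eventually_elim
    case (elim t)
    have "B * t powr q < A * (B / A + 1) * t powr q"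
      using assms(1) \<open>t > 0\<close> by (simp add: algebra_simps)
    also have "\<dots> \<le> A * t powr (p - q) * t powr q"
      using assms(1) elim by (intro mult_right_mono mult_left_mono) auto
    also have "\<dots> = A * t powr p"
      by (simp add: mult.assoc powr_add[symmetric])
    finally show ?case .
  qed
qed

theorem lemma4p8:
  fixes \<Omega> :: "'a::euclidean_space set" and s p q a \<Lambda> :: real and \<phi>1 :: "'a \<Rightarrow> real"
  assumes "bounded_smooth_domain \<Omega>"
    and "0 < s" "s < 1" "1 < p" "real DIM('a) > s * p"
    and "eigenfunction \<Omega> s p (lambda1 \<Omega> s p) \<phi>1"
    and "\<forall>x\<in>\<Omega>. \<phi>1 x > 0"
    and "Lint \<Omega> p \<phi>1 = 1"
    and "lambda1 \<Omega> s p < a"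
    and "1 < q" "q < p"
    and "\<Lambda> > 0"
  shows "\<exists>t0 > 0. \<forall>t \<ge> t0. \<forall>lam. 0 < lam \<and> lam < \<Lambda> \<longrightarrow>
           I_minus \<Omega> s p q a lam (\<lambda>x. - t * \<phi>1 x) < 0"
proof -
  define lam1 C where "lam1 = lambda1 \<Omega> s p" and "C = Lint \<Omega> q \<phi>1"
  have meas: "\<phi>1 \<in> borel_measurable lborel"
    using assms(6) unfolding eigenfunction_def Xsp_def Wsp_def by auto
  have I: "I_minus \<Omega> s p q a lam (\<lambda>x. - t * \<phi>1 x)
             = t powr p * (lam1 - a) / p + lam / q * t powr q * C" if "t \<ge> 0" for t lam
    using I_minus_neg_ray[OF meas _ that] assms(6-8)
    by (simp add: eigenfunction_Xnorm_p lam1_def C_def less_imp_le)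
  obtain T where T: "\<And>t. t \<ge> T \<Longrightarrow> \<Lambda> / q * C * t powr q < (a - lam1) / p * t powr p"
    using eventually_powr_dominates[of "(a - lam1) / p" q p "\<Lambda> / q * C"] assms(4,9,11)
    unfolding eventually_at_top_linorder lam1_def by auto
  show ?thesis
  proof (intro exI[of _ "max T 1"] conjI allI impI)
    fix t lam assume t: "max T 1 \<le> t" and lam: "0 < lam \<and> lam < \<Lambda>"
    have "lam / q * t powr q * C \<le> \<Lambda> / q * C * t powr q"
      using lam assms(10) Lint_nonneg[of \<Omega> q \<phi>1]
      by (simp add: C_def mult_right_mono divide_right_mono mult.commute mult.left_commute)
    also have "\<dots> < (a - lam1) / p * t powr p"
      using T t by simp
    finally show "I_minus \<Omega> s p q a lam (\<lambda>x. - t * \<phi>1 x) < 0"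
      using I[of t lam] t by (simp add: algebra_simps diff_divide_distrib)
  qed simp
qed

end
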